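(* Let $\delta,\tau$ be positive integers with $\gcd(\delta,\tau)=1$, let $\ell\ge 1$ be an integer and let $t=\ell\tau$. Then \[ g\Big(1+\frac{\delta}{\tau},t\Big)\le \frac{\ell\delta^2+\tau+2\delta t}{2\ell\delta^2+\delta+\tau+2\delta t}. \]
   Context: Let $\mathbb{F}$ be a finite field and $x_1,\dots,x_p$ a basis of $\mathbb{F}^p$. A $[t\times m,p]$ array code is a $t\times m$ array whose entries (cells) are linear combinations of $x_1,\dots,x_p$; its columns are called servers. It has the $k$-PIR property (is a $[t\times m,p]$ $k$-PIR array code) if for every $i\in\{1,\dots,p\}$ there exist $k$ pairwise disjoint sets $S_1,\dots,S_k$ of columns such that for every $j$ the vector $x_i$ lies in the linear span of all entries of the columns in $S_j$. Its PIR rate is $k/m$. For a rational $s>1$ and a positive integer $t$ with $st$ an integer, $g(s,t)$ is the largest PIR rate $k/m$ of a $[t\times m,st]$ $k$-PIR array code (over all finite fields, all $m$ and all $k$). *)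

theory Defs
  imports Complex_Main
begin

text \<open>A [t x m, p] array code over a field 'a is represented by
  C r c, for r < t (row) and c < m (column = server), a coefficient vector
  (C r c l for l < p is the coefficient of basis vector x_l).\<close>

definition in_col_span ::
  "nat \<Rightarrow> nat \<Rightarrow> (nat \<Rightarrow> nat \<Rightarrow> nat \<Rightarrow> 'a::field) \<Rightarrow> nat set \<Rightarrow> nat \<Rightarrow> bool" where
  "in_col_span t p C S i \<longleftrightarrow>
     (\<exists>coef::nat \<Rightarrow> nat \<Rightarrow> 'a. \<forall>l<p.
        (\<Sum>r<t. \<Sum>c\<in>S. coef r c * C r c l) = (if l = i then 1 else 0))"

definition is_pir_code ::
  "nat \<Rightarrow> nat \<Rightarrow> nat \<Rightarrow> nat \<Rightarrow> (nat \<Rightarrow> nat \<Rightarrow> nat \<Rightarrow> 'a::field) \<Rightarrow> bool" where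
  "is_pir_code t m p k C \<longleftrightarrow>
     (\<forall>i<p. \<exists>S::nat \<Rightarrow> nat set.
        (\<forall>j<k. S j \<subseteq> {..<m}) \<and>
        (\<forall>j1<k. \<forall>j2<k. j1 \<noteq> j2 \<longrightarrow> S j1 \<inter> S j2 = {}) \<and>
        (\<forall>j<k. in_col_span t p C (S j) i))"

text \<open>The paper's g(s,t) is the supremum of this over all
  finite fields; an upper bound on g is thus an upper bound for every 'a.\<close>
definition pir_g :: "'a::{finite,field} itself \<Rightarrow> real \<Rightarrow> nat \<Rightarrow> real" where
  "pir_g _ s t = Sup {real k / real m | k m p (C :: nat \<Rightarrow> nat \<Rightarrow> nat \<Rightarrow> 'a).
      m \<ge> 1 \<and> real p = s * real t \<and> is_pir_code t m p k C}"

end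

theory Submission
  imports Defs "HOL-Library.Function_Algebras" "HOL-Library.Disjoint_Sets"
begin

text \<open>Call a basis index \<open>i\<close> recovered by a column if \<open>x\<^sub>i\<close> lies in the span of that column
  alone; a column recovers at most \<open>t\<close> indices, and if it recovers exactly \<open>t\<close> it is full:
  all its cells are combinations of the recovered \<open>x\<^sub>i\<close>.  Fix \<open>i\<close> and its \<open>k\<close> disjoint
  recovery sets.  A set containing no column that recovers \<open>i\<close> has at least two columns and
  contains a non-full column not recovering \<open>i\<close>.  Hence, with \<open>D\<^sub>i\<close> the columns recovering \<open>i\<close>
  and \<open>Q\<^sub>i\<close> the non-full columns not recovering \<open>i\<close>, we get \<open>k \<le> D\<^sub>i + Q\<^sub>i\<close> and
  \<open>2k \<le> m + D\<^sub>i\<close>.  Summing over \<open>i\<close> and adding the second inequality with weight \<open>p - t\<close>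
  leaves a sum over columns in which every column contributes at most \<open>t (p - t + 1)\<close>.\<close>

definition fun_scale :: "'a::field \<Rightarrow> (nat \<Rightarrow> 'a) \<Rightarrow> nat \<Rightarrow> 'a" where
  "fun_scale a f = (\<lambda>x. a * f x)"

interpretation fun_vs: vector_space "fun_scale :: 'a::field \<Rightarrow> _"
  by unfold_locales (auto simp: fun_scale_def fun_eq_iff algebra_simps)

lemma sum_apply: "(\<Sum>x\<in>A. f x) (l::nat) = (\<Sum>x\<in>A. f x l)"
  by (induction A rule: infinite_finite_induct) auto

lemma (in vector_space) subset_span_of_independent_card_ge:
  assumes "finite V" "independent E" "E \<subseteq> span V" "card V \<le> card E"
  shows "V \<subseteq> span E"
proof
  fix v assume "v \<in> V"
  show "v \<in> span E"
  proof (rule ccontr)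
    assume v: "v \<notin> span E"
    have "finite E" using independent_span_bound assms by blast
    have "independent (insert v E)" using independent_insertI[OF v assms(2)] .
    moreover have "insert v E \<subseteq> span V" using assms(3) \<open>v \<in> V\<close> by (auto intro: span_base)
    ultimately have "card (insert v E) \<le> card V" using independent_span_bound assms(1) by blast
    moreover have "v \<notin> E" using v span_base by blast
    then have "card (insert v E) = Suc (card E)" using \<open>finite E\<close> by simp
    ultimately show False using assms(4) by simp
  qed
qed

definition unit_vec :: "nat \<Rightarrow> nat \<Rightarrow> 'a::field" where
  "unit_vec i = (\<lambda>l. if l = i then 1 else 0)"

lemma inj_unit_vec: "inj (unit_vec :: nat \<Rightarrow> nat \<Rightarrow> 'a::field)"
  unfolding inj_def unit_vec_def fun_eq_iff by (metis one_neq_zero)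

lemma card_unit_vec_image: "card ((unit_vec :: nat \<Rightarrow> nat \<Rightarrow> 'a::field) ` N) = card N"
  using card_image[OF inj_on_subset[OF inj_unit_vec subset_UNIV]] .

lemma independent_unit_vec_image: "fun_vs.independent ((unit_vec :: nat \<Rightarrow> nat \<Rightarrow> 'a::field) ` N)"
  unfolding fun_vs.independent_explicit_module
proof (intro allI impI)
  fix T and u :: "(nat \<Rightarrow> 'a) \<Rightarrow> 'a" and v
  assume T: "finite T" "T \<subseteq> unit_vec ` N" and sum0: "(\<Sum>w\<in>T. fun_scale (u w) w) = 0"
    and "v \<in> T"
  then obtain j where vj: "v = unit_vec j" by blast
  have "(\<Sum>w\<in>T - {v}. u w * w j) = 0"
  proof (intro sum.neutral ballI)
    fix w assume w: "w \<in> T - {v}"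
    then obtain j' where "w = unit_vec j'" using T by blast
    with w vj show "u w * w j = 0" by (auto simp: unit_vec_def)
  qed
  moreover have "(\<Sum>w\<in>T. u w * w j) = 0"
    using fun_cong[OF sum0, of j] by (simp add: sum_apply fun_scale_def)
  ultimately show "u v = 0"
    using T \<open>v \<in> T\<close> vj by (simp add: sum.remove unit_vec_def)
qed

lemma span_unit_vec_image_vanishes:
  assumes "f \<in> fun_vs.span ((unit_vec :: nat \<Rightarrow> nat \<Rightarrow> 'a::field) ` N)" "l \<notin> N"
  shows "f l = 0"
proof -
  have "fun_vs.subspace {f :: nat \<Rightarrow> 'a. f l = 0}"
    by (rule fun_vs.subspaceI) (auto simp: fun_scale_def)
  moreover have "unit_vec ` N \<subseteq> {f :: nat \<Rightarrow> 'a. f l = 0}"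
    using assms(2) by (auto simp: unit_vec_def)
  ultimately show ?thesis using fun_vs.span_minimal assms(1) by blast
qed

text \<open>Coefficient vectors are cut off at \<open>p\<close>, since \<open>in_col_span\<close> only looks at the
  coordinates below \<open>p\<close>.\<close>

definition column_vecs ::
  "nat \<Rightarrow> nat \<Rightarrow> (nat \<Rightarrow> nat \<Rightarrow> nat \<Rightarrow> 'a::field) \<Rightarrow> nat \<Rightarrow> (nat \<Rightarrow> 'a) set" where
  "column_vecs t p C c = (\<lambda>r l. if l < p then C r c l else 0) ` {..<t}"

definition recovered_by :: "nat \<Rightarrow> nat \<Rightarrow> (nat \<Rightarrow> nat \<Rightarrow> nat \<Rightarrow> 'a::field) \<Rightarrow> nat \<Rightarrow> nat set" where
  "recovered_by t p C c = {i. i < p \<and> in_col_span t p C {c} i}"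

definition full_column :: "nat \<Rightarrow> nat \<Rightarrow> (nat \<Rightarrow> nat \<Rightarrow> nat \<Rightarrow> 'a::field) \<Rightarrow> nat \<Rightarrow> bool" where
  "full_column t p C c \<longleftrightarrow> t \<le> card (recovered_by t p C c)"

lemma finite_recovered_by: "finite (recovered_by t p C c)"
  unfolding recovered_by_def by auto

lemma card_column_vecs_le: "card (column_vecs t p C c) \<le> t"
  unfolding column_vecs_def using card_image_le[of "{..<t}"] by simp

lemma unit_vec_recovered_in_span:
  assumes "i \<in> recovered_by t p C c"
  shows "unit_vec i \<in> fun_vs.span (column_vecs t p C c)"
proof -
  obtain coef where coef: "\<forall>l<p. (\<Sum>r<t. coef r c * C r c l) = (if l = i then 1 else 0)"
    using assms unfolding recovered_by_def in_col_span_def by auto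
  have "unit_vec i = (\<Sum>r<t. fun_scale (coef r c) (\<lambda>l. if l < p then C r c l else 0))"
  proof
    fix l
    show "unit_vec i l = (\<Sum>r<t. fun_scale (coef r c) (\<lambda>l. if l < p then C r c l else 0)) l"
      using coef assms by (cases "l < p") (auto simp: sum_apply fun_scale_def unit_vec_def recovered_by_def)
  qed
  also have "\<dots> \<in> fun_vs.span (column_vecs t p C c)"
    unfolding column_vecs_def by (intro fun_vs.span_sum fun_vs.span_scale fun_vs.span_base) auto
  finally show ?thesis .
qed

lemma card_recovered_by_le: "card (recovered_by t p C c) \<le> t"
proof -
  have fin: "finite (column_vecs t p C c)" by (simp add: column_vecs_def)
  have "unit_vec ` recovered_by t p C c \<subseteq> fun_vs.span (column_vecs t p C c)"
    using unit_vec_recovered_in_span by blast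
  from fun_vs.independent_span_bound[OF fin independent_unit_vec_image this]
  have "card (recovered_by t p C c) \<le> card (column_vecs t p C c)"
    by (simp add: card_unit_vec_image)
  then show ?thesis using card_column_vecs_le[of t p C c] by simp
qed

lemma full_column_entry_eq_0:
  assumes "full_column t p C c" "r < t" "l < p" "l \<notin> recovered_by t p C c"
  shows "C r c l = 0"
proof -
  let ?E = "unit_vec ` recovered_by t p C c"
  have "column_vecs t p C c \<subseteq> fun_vs.span ?E"
  proof (rule fun_vs.subset_span_of_independent_card_ge)
    show "finite (column_vecs t p C c)" by (simp add: column_vecs_def)
    show "fun_vs.independent ?E" by (rule independent_unit_vec_image)
    show "?E \<subseteq> fun_vs.span (column_vecs t p C c)" using unit_vec_recovered_in_span by blast
    show "card (column_vecs t p C c) \<le> card ?E"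
      using card_column_vecs_le[of t p C c] assms(1)
      unfolding card_unit_vec_image full_column_def by linarith
  qed
  moreover have "(\<lambda>l. if l < p then C r c l else 0) \<in> column_vecs t p C c"
    using assms(2) by (simp add: column_vecs_def)
  ultimately have "(\<lambda>l. if l < p then C r c l else 0) \<in> fun_vs.span ?E" by blast
  from span_unit_vec_image_vanishes[OF this assms(4)] show ?thesis using assms(3) by simp
qed

lemma not_in_col_span_empty: "i < p \<Longrightarrow> \<not> in_col_span t p C {} i"
  unfolding in_col_span_def by auto

lemma recovery_set_has_nonfull_column:
  assumes "in_col_span t p C S i" "i < p" "\<forall>c\<in>S. i \<notin> recovered_by t p C c"
  shows "\<exists>c\<in>S. \<not> full_column t p C c"
proof (rule ccontr)
  assume all_full: "\<not> ?thesis"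
  obtain coef where coef: "\<forall>l<p. (\<Sum>r<t. \<Sum>c\<in>S. coef r c * C r c l) = (if l = i then 1 else 0)"
    using assms(1) unfolding in_col_span_def by blast
  have "C r c i = 0" if "r < t" "c \<in> S" for r c
    using full_column_entry_eq_0 all_full assms(2,3) that by blast
  then have "(\<Sum>r<t. \<Sum>c\<in>S. coef r c * C r c i) = 0" by simp
  then show False using coef assms(2) by simp
qed

lemma two_le_card_recovery_set:
  assumes "finite S" "in_col_span t p C S i" "i < p" "\<forall>c\<in>S. i \<notin> recovered_by t p C c"
  shows "2 \<le> card S"
proof (rule ccontr)
  assume "\<not> 2 \<le> card S"
  then have "card S = 0 \<or> card S = 1" by linarith
  then consider "S = {}" | c where "S = {c}"
    using assms(1) by (auto simp: card_Suc_eq)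
  then show False
    using assms(2-4) not_in_col_span_empty by cases (auto simp: recovered_by_def)
qed

lemma card_le_card_of_disjoint_family_meeting:
  assumes "finite D" "disjoint_family_on S J" "\<forall>j\<in>J. S j \<inter> D \<noteq> {}"
  shows "card J \<le> card D"
proof -
  have "\<forall>j\<in>J. \<exists>x. x \<in> S j \<inter> D" using assms(3) by blast
  then obtain f where f: "\<forall>j\<in>J. f j \<in> S j \<inter> D" by (rule bchoice[THEN exE])
  have "inj_on f J"
  proof (rule inj_onI)
    fix a b assume ab: "a \<in> J" "b \<in> J" "f a = f b"
    then have "S a \<inter> S b \<noteq> {}" using f by auto
    then show "a = b" using assms(2) ab unfolding disjoint_family_on_def by blast
  qed
  moreover have "f ` J \<subseteq> D" using f by blast
  ultimately show ?thesis using card_inj_on_le assms(1) by blast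
qed

lemma pir_recovery_counts:
  assumes pir: "is_pir_code t m p k C" and "i < p"
  defines "D \<equiv> {c\<in>{..<m}. i \<in> recovered_by t p C c}"
    and "Q \<equiv> {c\<in>{..<m}. \<not> full_column t p C c \<and> i \<notin> recovered_by t p C c}"
  shows "k \<le> card D + card Q" and "2 * k \<le> m + card D"
proof -
  obtain S where S_sub: "\<forall>j<k. S j \<subseteq> {..<m}"
    and S_disj: "\<forall>j1<k. \<forall>j2<k. j1 \<noteq> j2 \<longrightarrow> S j1 \<inter> S j2 = {}"
    and S_span: "\<forall>j<k. in_col_span t p C (S j) i"
    using pir[unfolded is_pir_code_def, rule_format, OF \<open>i < p\<close>] by blast
  have disj: "disjoint_family_on S T" if "T \<subseteq> {..<k}" for T
    using S_disj that unfolding disjoint_family_on_def by blast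
  define T1 where "T1 = {j\<in>{..<k}. S j \<inter> D \<noteq> {}}"
  define T2 where "T2 = {j\<in>{..<k}. S j \<inter> D = {}}"
  have "T1 \<union> T2 = {..<k}" "T1 \<inter> T2 = {}" "finite T1" "finite T2"
    unfolding T1_def T2_def by auto
  then have k_eq: "k = card T1 + card T2" using card_Un_disjoint[of T1 T2] by simp
  have T2_facts: "j < k" "finite (S j)" "in_col_span t p C (S j) i"
      "\<forall>c\<in>S j. i \<notin> recovered_by t p C c" if "j \<in> T2" for j
    using that S_sub S_span finite_subset[of "S j" "{..<m}"] unfolding T2_def D_def by blast+
  have T1_le: "card T1 \<le> card D"
    by (rule card_le_card_of_disjoint_family_meeting) (auto simp: T1_def D_def intro: disj)
  have "card T2 \<le> card Q"
  proof (rule card_le_card_of_disjoint_family_meeting)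
    show "\<forall>j\<in>T2. S j \<inter> Q \<noteq> {}"
    proof
      fix j assume "j \<in> T2"
      then obtain c where "c \<in> S j" "\<not> full_column t p C c"
        using recovery_set_has_nonfull_column T2_facts \<open>i < p\<close> by blast
      moreover have "c < m" using S_sub T2_facts(1)[OF \<open>j \<in> T2\<close>] \<open>c \<in> S j\<close> by blast
      ultimately show "S j \<inter> Q \<noteq> {}"
        using T2_facts(4)[OF \<open>j \<in> T2\<close>] by (auto simp: Q_def)
    qed
  qed (auto simp: T2_def Q_def intro: disj)
  then show "k \<le> card D + card Q" using k_eq T1_le by linarith
  have "2 * card T2 = (\<Sum>j\<in>T2. 2)" by simp
  also have "\<dots> \<le> (\<Sum>j\<in>T2. card (S j))"
    by (rule sum_mono) (use two_le_card_recovery_set T2_facts \<open>i < p\<close> in blast)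
  also have "\<dots> = card (\<Union>j\<in>T2. S j)"
    by (rule card_UN_disjoint'[symmetric]) (auto simp: T2_def intro: disj T2_facts)
  also have "\<dots> \<le> card ({..<m} - D)"
    using S_sub by (intro card_mono) (auto simp: T2_def)
  also have "\<dots> = m - card D" by (subst card_Diff_subset) (auto simp: D_def)
  finally have "2 * card T2 \<le> m - card D" .
  moreover have "card D \<le> m" using card_mono[of "{..<m}" D] by (auto simp: D_def)
  ultimately show "2 * k \<le> m + card D" using k_eq T1_le by linarith
qed

lemma sum_card_filter_swap:
  assumes "finite A" "finite B"
  shows "(\<Sum>i\<in>A. card {c\<in>B. P i c}) = (\<Sum>c\<in>B. card {i\<in>A. P i c})"
proof -
  have card_filter: "card {x\<in>X. Q x} = (\<Sum>x\<in>X. if Q x then 1 else 0)" if "finite X"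
    for X :: "'c set" and Q
    using that by (simp add: sum.If_cases Int_def conj_commute)
  show ?thesis using assms by (simp add: card_filter) (rule sum.swap)
qed

lemma column_contribution_le:
  fixes n t p :: nat
  assumes "n \<le> t" "t \<le> p"
  shows "(if t \<le> n then n else p) + (p - t) * n \<le> t * (p - t + 1)"
proof -
  obtain e where p: "p = t + e" using assms(2) le_Suc_ex by blast
  show ?thesis
  proof (cases "t \<le> n")
    case True
    then show ?thesis using assms p by (simp add: algebra_simps)
  next
    case False
    then have "e * (n + 1) \<le> e * t" by (intro mult_le_mono2) simp
    then show ?thesis using False p by (simp add: algebra_simps)
  qed
qed

lemma pir_count_bound:
  assumes pir: "is_pir_code t m p k C" and "t \<le> p"
  shows "k * (p * (2 * (p - t) + 1)) \<le> m * (t * (p - t + 1) + (p - t) * p)"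
proof -
  let ?N = "recovered_by t p C" and ?full = "full_column t p C"
  let ?D = "\<lambda>i. {c\<in>{..<m}. i \<in> ?N c}"
    and ?Q = "\<lambda>i. {c\<in>{..<m}. \<not> ?full c \<and> i \<notin> ?N c}"
  have N_eq: "{i\<in>{..<p}. i \<in> ?N c} = ?N c" for c
    by (auto simp: recovered_by_def)
  have N_le: "card (?N c) \<le> t" for c by (rule card_recovered_by_le)
  have column_sum: "card {i\<in>{..<p}. i \<in> ?N c} + card {i\<in>{..<p}. \<not> ?full c \<and> i \<notin> ?N c}
      = (if t \<le> card (?N c) then card (?N c) else p)" for c
  proof (cases "?full c")
    case True
    then show ?thesis using N_eq[of c] by (simp add: full_column_def)
  next
    case False
    have N_sub: "?N c \<subseteq> {..<p}" by (auto simp: recovered_by_def)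
    have "{i\<in>{..<p}. \<not> ?full c \<and> i \<notin> ?N c} = {..<p} - ?N c" using False by auto
    moreover have "card ({..<p} - ?N c) = p - card (?N c)"
      using card_Diff_subset[OF finite_recovered_by N_sub] by simp
    moreover have "card (?N c) \<le> p" using card_mono[OF _ N_sub] by simp
    ultimately show ?thesis using False N_eq[of c] by (simp add: full_column_def)
  qed
  have "p * k \<le> (\<Sum>i<p. card (?D i) + card (?Q i))"
    using pir_recovery_counts(1)[OF pir] sum_mono[of "{..<p}" "\<lambda>_. k"] by simp
  also have "\<dots> = (\<Sum>c<m. card {i\<in>{..<p}. i \<in> ?N c}) + (\<Sum>c<m. card {i\<in>{..<p}. \<not> ?full c \<and> i \<notin> ?N c})"
    by (simp only: sum.distrib sum_card_filter_swap[of "{..<p}" "{..<m}"] finite_lessThan)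
  also have "\<dots> = (\<Sum>c<m. if t \<le> card (?N c) then card (?N c) else p)"
    by (simp only: column_sum flip: sum.distrib)
  finally have first: "p * k \<le> (\<Sum>c<m. if t \<le> card (?N c) then card (?N c) else p)" .
  have "p * (2 * k) \<le> (\<Sum>i<p. m + card (?D i))"
    using pir_recovery_counts(2)[OF pir] sum_mono[of "{..<p}" "\<lambda>_. 2 * k"] by simp
  also have "\<dots> = p * m + (\<Sum>c<m. card (?N c))"
    using sum_card_filter_swap[of "{..<p}" "{..<m}" "\<lambda>i c. i \<in> ?N c"]
    by (simp only: sum.distrib sum_constant card_lessThan N_eq finite_lessThan of_nat_id simp_thms)
  finally have second: "p * (2 * k) \<le> p * m + (\<Sum>c<m. card (?N c))" .
  have "k * (p * (2 * (p - t) + 1)) \<le>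
      (\<Sum>c<m. (if t \<le> card (?N c) then card (?N c) else p) + (p - t) * card (?N c)) + (p - t) * (p * m)"
    using first mult_le_mono2[OF second, of "p - t"]
    by (simp add: algebra_simps sum.distrib sum_distrib_left)
  also have "\<dots> \<le> (\<Sum>c<m. t * (p - t + 1)) + (p - t) * (p * m)"
    using column_contribution_le[OF N_le \<open>t \<le> p\<close>] by (intro add_mono sum_mono) auto
  finally show ?thesis by (simp add: algebra_simps)
qed

theorem pir_rate_le:
  assumes "is_pir_code t m p k C" "t \<le> p" "0 < p" "0 < m"
  shows "real k / real m \<le> real (t * (p - t + 1) + (p - t) * p) / real (p * (2 * (p - t) + 1))"
proof -
  have "real k * real (p * (2 * (p - t) + 1)) \<le> real (t * (p - t + 1) + (p - t) * p) * real m"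
    using pir_count_bound[OF assms(1,2)] by (simp only: of_nat_mult[symmetric] of_nat_le_iff mult.commute)
  moreover have "0 < p * (2 * (p - t) + 1)" using assms(3) by simp
  then have "0 < real (p * (2 * (p - t) + 1))" by (simp only: of_nat_0_less_iff)
  moreover have "x / y \<le> a / b" if "x * b \<le> a * y" "0 < y" "0 < b" for x y a b :: real
    using that by (simp add: field_simps)
  ultimately show ?thesis using assms(4) by simp
qed

lemma pir_g_le:
  assumes "real p\<^sub>0 = s * real t"
    and "\<And>k m p (C :: nat \<Rightarrow> nat \<Rightarrow> nat \<Rightarrow> 'a).
      1 \<le> m \<Longrightarrow> real p = s * real t \<Longrightarrow> is_pir_code t m p k C \<Longrightarrow> real k / real m \<le> b"
  shows "pir_g TYPE('a::{finite,field}) s t \<le> b"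
  unfolding pir_g_def
proof (rule cSup_least)
  have "is_pir_code t 1 p\<^sub>0 0 (\<lambda>_ _ _. 0 :: 'a)" by (simp add: is_pir_code_def)
  then show "{real k / real m | k m p (C :: nat \<Rightarrow> nat \<Rightarrow> nat \<Rightarrow> 'a).
      m \<ge> 1 \<and> real p = s * real t \<and> is_pir_code t m p k C} \<noteq> {}"
    using assms(1) by blast
qed (use assms(2) in blast)

theorem corollary1:
  fixes \<delta> \<tau> l :: nat
  assumes "\<delta> > 0" and "\<tau> > 0" and "gcd \<delta> \<tau> = 1" and "l \<ge> 1"
  shows "pir_g TYPE('a::{finite,field}) (1 + real \<delta> / real \<tau>) (l * \<tau>)
     \<le> (real l * real \<delta>^2 + real \<tau> + 2 * real \<delta> * real (l * \<tau>))
        / (2 * real l * real \<delta>^2 + real \<delta> + real \<tau> + 2 * real \<delta> * real (l * \<tau>))"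
proof -
  let ?p = "l * (\<tau> + \<delta>)" and ?t = "l * \<tau>"
  let ?bound = "(real l * real \<delta>^2 + real \<tau> + 2 * real \<delta> * real ?t)
        / (2 * real l * real \<delta>^2 + real \<delta> + real \<tau> + 2 * real \<delta> * real ?t)"
  have p_eq: "(1 + real \<delta> / real \<tau>) * real ?t = real ?p"
    using assms(2) by (simp add: field_simps)
  have "real (?t * (?p - ?t + 1) + (?p - ?t) * ?p) / real (?p * (2 * (?p - ?t) + 1))
      = (real l * (real l * real \<delta>^2 + real \<tau> + 2 * real \<delta> * real ?t))
        / (real l * (2 * real l * real \<delta>^2 + real \<delta> + real \<tau> + 2 * real \<delta> * real ?t))"
    by (simp add: algebra_simps power2_eq_square)
  also have "\<dots> = ?bound" using assms(4) by simp
  finally have bound_eq: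
    "real (?t * (?p - ?t + 1) + (?p - ?t) * ?p) / real (?p * (2 * (?p - ?t) + 1)) = ?bound" .
  show ?thesis
  proof (rule pir_g_le[of ?p])
    fix k m p and C :: "nat \<Rightarrow> nat \<Rightarrow> nat \<Rightarrow> 'a"
    assume "1 \<le> m" "real p = (1 + real \<delta> / real \<tau>) * real ?t" "is_pir_code ?t m p k C"
    moreover from this(2) have "p = ?p" using p_eq of_nat_eq_iff by metis
    ultimately show "real k / real m \<le> ?bound"
      using pir_rate_le[of ?t m ?p k C] assms bound_eq by simp
  qed (rule p_eq[symmetric])
qed

end
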